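(* Let $X$ be a complete metric space and $\mathcal Z_{\mathcal S}=(X,(\phi_j)_{j=0}^{n-1},(\rho_j)_{j=0}^{n-1})$ a Matkowski contractive GIFZS of degree $m$ with a proper family $(\rho_j)$, and let $u_{\mathcal Z}$ be its fuzzy attractor. Let $I=\{j:\rho_j(1)=1\}$, $\mathcal S=(X,(\phi_j)_{j=0}^{n-1})$ and $\mathcal S'=(X,(\phi_j)_{j\in I})$. Then $[u_{\mathcal Z}]^0=A_{\mathcal S}$ and $[u_{\mathcal Z}]^1=A_{\mathcal S'}$.
   Context: A fuzzy subset of $X$ is $u:X\to[0,1]$. For $\alpha\in(0,1]$, $[u]^\alpha=\{x:u(x)\ge\alpha\}$, $[u]^0=\overline{\{x:u(x)>0\}}$. $\mathcal F_X^*$: fuzzy subsets that are normal, usc and compactly supported. $X^m$ has the maximum metric $d^m$. For $T:Z\to Y$, $T(u)(y)=\sup\{u(z):T(z)=y\}$ if $y\in T(Z)$, else $0$; $\rho(u)=\rho\circ u$; $(u_0\times\cdots\times u_{m-1})(x_0,\dots,x_{m-1})=\min_iu_i(x_i)$; $\vee$ is pointwise max. A family $(\rho_j)$ of maps $[0,1]\to[0,1]$ is admissible if each is nondecreasing, right continuous, $\rho_j(0)=0$, and $\rho_j(1)=1$ for some $j$. For each $j$: $r_+^j=\inf\{t:\rho_j(t)>0\}$ and $\beta_j(\alpha)=\inf\{t\in[0,1]:\rho_j(t)\ge\alpha\}$ for $\alpha\in[0,\rho_j(1)]$. An admissible family is proper if $r_+^j=0$ and $\beta_j(\rho_j(1))=1$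 for all $j$. A GIFS of degree $m$ is $(X,(\phi_j))$ with continuous $\phi_j:X^m\to X$; it is Matkowski contractive if each $\phi_j$ satisfies $d(\phi_j(x),\phi_j(y))\le\varphi_j(d^m(x,y))$ for some nondecreasing $\varphi_j$ with $\varphi_j^{(k)}(t)\to0$ for all $t>0$; on complete $X$ its attractor $A_{\mathcal S}$ is the unique nonempty compact $A$ with $A=\bigcup_j\phi_j(A\times\cdots\times A)$. The GIFZS operator is $\mathcal Z_{\mathcal S}(u_0,\dots,u_{m-1})=\bigvee_j\rho_j(\phi_j(u_0\times\cdots\times u_{m-1}))$ and the fuzzy attractor is the unique $u_{\mathcal Z}\in\mathcal F_X^*$ with $\mathcal Z_{\mathcal S}(u_{\mathcal Z},\dots,u_{\mathcal Z})=u_{\mathcal Z}$. *)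

theory Defs
  imports "HOL-Analysis.Analysis"
begin

text \<open>m-tuples of points of X are represented as extensional functions on {..<m}.\<close>
definition tuples :: "nat \<Rightarrow> 'a set \<Rightarrow> (nat \<Rightarrow> 'a) set" where
  "tuples m A = PiE {..<m} (\<lambda>_. A)"

definition dmax :: "nat \<Rightarrow> (nat \<Rightarrow> 'a::metric_space) \<Rightarrow> (nat \<Rightarrow> 'a) \<Rightarrow> real" where
  "dmax m x y = Max ((\<lambda>i. dist (x i) (y i)) ` {..<m})"

definition continuous_dmax :: "nat \<Rightarrow> ((nat \<Rightarrow> 'a::metric_space) \<Rightarrow> 'a) \<Rightarrow> bool" where
  "continuous_dmax m f \<longleftrightarrow> (\<forall>x\<in>tuples m UNIV. \<forall>e>0. \<exists>d>0. \<forall>y\<in>tuples m UNIV.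
       dmax m x y < d \<longrightarrow> dist (f x) (f y) < e)"

definition matkowski_contraction :: "nat \<Rightarrow> ((nat \<Rightarrow> 'a::metric_space) \<Rightarrow> 'a) \<Rightarrow> bool" where
  "matkowski_contraction m f \<longleftrightarrow> (\<exists>\<phi>::real \<Rightarrow> real. mono_on {0..} \<phi> \<and> (\<forall>t\<ge>0. \<phi> t \<ge> 0) \<and>
      (\<forall>t>0. (\<lambda>k. (\<phi> ^^ k) t) \<longlonglongrightarrow> 0) \<and>
      (\<forall>x\<in>tuples m UNIV. \<forall>y\<in>tuples m UNIV. dist (f x) (f y) \<le> \<phi> (dmax m x y)))"

definition gifs_attractor :: "nat \<Rightarrow> nat set \<Rightarrow> (nat \<Rightarrow> (nat \<Rightarrow> 'a::metric_space) \<Rightarrow> 'a) \<Rightarrow> 'a set" where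
  "gifs_attractor m J \<Phi> = (THE A. A \<noteq> {} \<and> compact A \<and> A = (\<Union>j\<in>J. \<Phi> j ` tuples m A))"

definition level :: "('a::topological_space \<Rightarrow> real) \<Rightarrow> real \<Rightarrow> 'a set" where
  "level u \<alpha> = (if \<alpha> = 0 then closure {x. u x > 0} else {x. u x \<ge> \<alpha>})"

definition usc :: "('a::topological_space \<Rightarrow> real) \<Rightarrow> bool" where
  "usc u \<longleftrightarrow> (\<forall>x. \<forall>e>0. \<forall>\<^sub>F y in at x. u y < u x + e)"

definition fuzzy_star :: "('a::topological_space \<Rightarrow> real) set" where
  "fuzzy_star = {u. (\<forall>x. 0 \<le> u x \<and> u x \<le> 1) \<and> (\<exists>x. u x = 1) \<and> usc u \<and> compact (level u 0)}"

definition zadeh_ext :: "'z set \<Rightarrow> ('z \<Rightarrow> 'y) \<Rightarrow> ('z \<Rightarrow> real) \<Rightarrow> 'y \<Rightarrow> real" where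
  "zadeh_ext Z T v y = (if y \<in> T ` Z then Sup {v z | z. z \<in> Z \<and> T z = y} else 0)"

definition fuzzy_prod :: "nat \<Rightarrow> (nat \<Rightarrow> 'a \<Rightarrow> real) \<Rightarrow> (nat \<Rightarrow> 'a) \<Rightarrow> real" where
  "fuzzy_prod m us x = Min ((\<lambda>i. us i (x i)) ` {..<m})"

definition gifzs_op :: "nat \<Rightarrow> nat \<Rightarrow> (nat \<Rightarrow> (nat \<Rightarrow> 'a) \<Rightarrow> 'a) \<Rightarrow> (nat \<Rightarrow> real \<Rightarrow> real)
     \<Rightarrow> (nat \<Rightarrow> 'a \<Rightarrow> real) \<Rightarrow> 'a \<Rightarrow> real" where
  "gifzs_op m n \<Phi> \<rho> us y = Max ((\<lambda>j. \<rho> j (zadeh_ext (tuples m UNIV) (\<Phi> j) (fuzzy_prod m us) y)) ` {..<n})"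

definition admissible :: "nat \<Rightarrow> (nat \<Rightarrow> real \<Rightarrow> real) \<Rightarrow> bool" where
  "admissible n \<rho> \<longleftrightarrow>
     (\<forall>j<n. (\<forall>t\<in>{0..1}. 0 \<le> \<rho> j t \<and> \<rho> j t \<le> 1) \<and> mono_on {0..1} (\<rho> j)
        \<and> (\<forall>t\<in>{0..<1}. (\<rho> j \<longlongrightarrow> \<rho> j t) (at_right t)) \<and> \<rho> j 0 = 0)
     \<and> (\<exists>j<n. \<rho> j 1 = 1)"

definition r_plus :: "(real \<Rightarrow> real) \<Rightarrow> real" where
  "r_plus \<rho> = Inf {t\<in>{0..1}. \<rho> t > 0}"

definition beta :: "(real \<Rightarrow> real) \<Rightarrow> real \<Rightarrow> real" where
  "beta \<rho> \<alpha> = Inf {t\<in>{0..1}. \<rho> t \<ge> \<alpha>}"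

definition proper_family :: "nat \<Rightarrow> (nat \<Rightarrow> real \<Rightarrow> real) \<Rightarrow> bool" where
  "proper_family n \<rho> \<longleftrightarrow> admissible n \<rho> \<and>
     (\<forall>j<n. r_plus (\<rho> j) = 0 \<and> beta (\<rho> j) (\<rho> j 1) = 1)"

end

theory Submission
  imports Defs
begin

text \<open>Because every \<open>\<rho>\<^sub>j\<close> of a proper family is positive exactly on \<open>(0,1]\<close> and reaches
  \<open>\<rho>\<^sub>j(1)\<close> only at \<open>1\<close>, the fixed point equation says: \<open>u y > 0\<close> iff \<open>y = \<phi>\<^sub>j(z)\<close> for some \<open>j\<close>
  and some tuple \<open>z\<close> of points where \<open>u > 0\<close>; and \<open>u y = 1\<close> iff \<open>y = \<phi>\<^sub>j(z)\<close> for some \<open>j\<close> with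
  \<open>\<rho>\<^sub>j(1) = 1\<close> and some tuple \<open>z\<close> of points where \<open>u = 1\<close>, the supremum in the Zadeh extension
  being attained by compactness of the support and upper semicontinuity of \<open>u\<close>. Thus the
  support of \<open>u\<close> is invariant under the whole system, and so is its closure by continuity,
  while the \<open>1\<close>-cut is invariant under the subsystem \<open>I\<close>. Both cuts are nonempty and compact,
  so they are the attractors, because nonempty compact invariant sets of a Matkowski
  contractive GIFS are unique.\<close>

lemma tuples_iff:
  "z \<in> tuples m A \<longleftrightarrow> (\<forall>i<m. z i \<in> A) \<and> (\<forall>i\<ge>m. z i = undefined)"
  unfolding tuples_def PiE_iff extensional_def by auto

lemma tuples_mono: "A \<subseteq> B \<Longrightarrow> tuples m A \<subseteq> tuples m B"
  unfolding tuples_def by (rule PiE_mono) auto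

lemma tuples_restrictI:
  "(\<And>i. i < m \<Longrightarrow> f i \<in> A) \<Longrightarrow> (\<lambda>i. if i < m then f i else undefined) \<in> tuples m A"
  by (simp add: tuples_iff)

lemma dmax_le_iff: "m \<ge> 1 \<Longrightarrow> dmax m x y \<le> t \<longleftrightarrow> (\<forall>i<m. dist (x i) (y i) \<le> t)"
  unfolding dmax_def using lessThan_empty_iff[of m] by (subst Max_le_iff) auto

lemma dmax_less_iff: "m \<ge> 1 \<Longrightarrow> dmax m x y < t \<longleftrightarrow> (\<forall>i<m. dist (x i) (y i) < t)"
  unfolding dmax_def using lessThan_empty_iff[of m] by (subst Max_less_iff) auto

lemma dmax_nonneg: "m \<ge> 1 \<Longrightarrow> 0 \<le> dmax m x y"
  unfolding dmax_def using lessThan_empty_iff[of m] by (subst Max_ge_iff) auto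

subsection \<open>Compactness of images of tuples\<close>

lemma tuples_compact_convergent_subseq:
  fixes z :: "nat \<Rightarrow> nat \<Rightarrow> 'a::metric_space"
  assumes K: "compact K" and zK: "\<And>k i. i < m \<Longrightarrow> z k i \<in> K"
  obtains r w where "strict_mono r" "w \<in> tuples m K" "\<And>i. i < m \<Longrightarrow> (\<lambda>k. z (r k) i) \<longlonglongrightarrow> w i"
proof -
  have "\<exists>r. strict_mono r \<and> (\<forall>i<p. \<exists>l\<in>K. (\<lambda>k. z (r k) i) \<longlonglongrightarrow> l)" if "p \<le> m" for p
    using that
  proof (induction p)
    case 0
    show ?case by (rule exI[of _ id]) (simp add: strict_mono_def)
  next
    case (Suc p)
    then obtain r where r: "strict_mono r" "\<forall>i<p. \<exists>l\<in>K. (\<lambda>k. z (r k) i) \<longlonglongrightarrow> l"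
      by auto
    have "\<forall>k. z (r k) p \<in> K" using zK Suc.prems by auto
    then obtain l r' where l: "l \<in> K" "strict_mono r'" "(\<lambda>k. z (r (r' k)) p) \<longlonglongrightarrow> l"
      using K unfolding compact_def o_def by meson
    have "\<exists>l\<in>K. (\<lambda>k. z (r (r' k)) i) \<longlonglongrightarrow> l" if "i < Suc p" for i
    proof (cases "i = p")
      case False
      with r(2) \<open>i < Suc p\<close> obtain l' where "l' \<in> K" "(\<lambda>k. z (r k) i) \<longlonglongrightarrow> l'"
        by (meson less_SucE)
      then show ?thesis using LIMSEQ_subseq_LIMSEQ[OF _ l(2)] by (auto simp: o_def)
    qed (use l in auto)
    then show ?case using strict_mono_o[OF r(1) l(2)] by (auto simp: o_def)
  qed
  then obtain r where r: "strict_mono r" "\<forall>i<m. \<exists>l\<in>K. (\<lambda>k. z (r k) i) \<longlonglongrightarrow> l"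
    by blast
  then obtain g where g: "\<And>i. i < m \<Longrightarrow> g i \<in> K \<and> (\<lambda>k. z (r k) i) \<longlonglongrightarrow> g i"
    by metis
  show thesis
    by (rule that[OF r(1), of "\<lambda>i. if i < m then g i else undefined"])
      (use g in \<open>auto intro: tuples_restrictI\<close>)
qed

lemma continuous_dmax_tendsto:
  fixes f :: "(nat \<Rightarrow> 'a::metric_space) \<Rightarrow> 'a"
  assumes m: "m \<ge> 1" and f: "continuous_dmax m f" and w: "w \<in> tuples m UNIV"
    and s: "\<And>k. s k \<in> tuples m UNIV" and lim: "\<And>i. i < m \<Longrightarrow> (\<lambda>k. s k i) \<longlonglongrightarrow> w i"
  shows "(\<lambda>k. f (s k)) \<longlonglongrightarrow> f w"
proof (rule tendstoI)
  fix e :: real assume "e > 0"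
  then obtain d where d: "d > 0" "\<forall>y\<in>tuples m UNIV. dmax m w y < d \<longrightarrow> dist (f w) (f y) < e"
    using f w unfolding continuous_dmax_def by meson
  have "\<forall>i\<in>{..<m}. eventually (\<lambda>k. dist (w i) (s k i) < d) sequentially"
    using tendstoD[OF lim d(1)] by (simp add: dist_commute)
  then have "eventually (\<lambda>k. \<forall>i\<in>{..<m}. dist (w i) (s k i) < d) sequentially"
    by (rule eventually_ball_finite[rotated]) auto
  then show "eventually (\<lambda>k. dist (f (s k)) (f w) < e) sequentially"
  proof eventually_elim
    case (elim k)
    then have "dmax m w (s k) < d" using m by (simp add: dmax_less_iff)
    then have "dist (f w) (f (s k)) < e" using d(2) s by blast
    then show ?case by (simp add: dist_commute)
  qed
qed

lemma compact_image_tuples: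
  fixes f :: "(nat \<Rightarrow> 'a::metric_space) \<Rightarrow> 'a"
  assumes m: "m \<ge> 1" and f: "continuous_dmax m f" and K: "compact K"
  shows "compact (f ` tuples m K)"
  unfolding compact_def
proof (intro allI impI)
  fix g :: "nat \<Rightarrow> 'a" assume "\<forall>k. g k \<in> f ` tuples m K"
  then have "\<forall>k. \<exists>x. x \<in> tuples m K \<and> g k = f x" by blast
  then obtain z where z: "\<And>k. z k \<in> tuples m K" "\<And>k. g k = f (z k)"
    by metis
  obtain r w where r: "strict_mono r" "w \<in> tuples m K" "\<And>i. i < m \<Longrightarrow> (\<lambda>k. z (r k) i) \<longlonglongrightarrow> w i"
    using tuples_compact_convergent_subseq[OF K, of m z] z(1) by (auto simp: tuples_iff)
  have "(\<lambda>k. f (z (r k))) \<longlonglongrightarrow> f w"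
    by (rule continuous_dmax_tendsto[OF m f]) (use r z tuples_mono[of K UNIV m] in auto)
  then show "\<exists>l\<in>f ` tuples m K. \<exists>r. strict_mono r \<and> (g \<circ> r) \<longlonglongrightarrow> l"
    using r z by (auto simp: o_def)
qed

lemma gifs_invariant_closure:
  fixes \<Phi> :: "nat \<Rightarrow> (nat \<Rightarrow> 'a::metric_space) \<Rightarrow> 'a"
  assumes m: "m \<ge> 1" and J: "finite J" and cont: "\<forall>j\<in>J. continuous_dmax m (\<Phi> j)"
    and K: "compact (closure S)" and S: "S = (\<Union>j\<in>J. \<Phi> j ` tuples m S)"
  shows "closure S = (\<Union>j\<in>J. \<Phi> j ` tuples m (closure S))"
proof
  have "closed (\<Union>j\<in>J. \<Phi> j ` tuples m (closure S))"
    using compact_image_tuples[OF m _ K] cont J by (intro closed_UN compact_imp_closed) auto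
  moreover have "S \<subseteq> (\<Union>j\<in>J. \<Phi> j ` tuples m (closure S))"
    using S tuples_mono[OF closure_subset, of m S] by blast
  ultimately show "closure S \<subseteq> (\<Union>j\<in>J. \<Phi> j ` tuples m (closure S))"
    by (rule closure_minimal[rotated])
next
  show "(\<Union>j\<in>J. \<Phi> j ` tuples m (closure S)) \<subseteq> closure S"
  proof clarify
    fix j z assume j: "j \<in> J" and z: "z \<in> tuples m (closure S)"
    have "\<forall>i<m. \<exists>x. (\<forall>k. x k \<in> S) \<and> x \<longlonglongrightarrow> z i"
      using z unfolding tuples_iff closure_sequential by blast
    then obtain x where x: "\<And>i. i < m \<Longrightarrow> (\<forall>k. x i k \<in> S) \<and> x i \<longlonglongrightarrow> z i"
      by metis
    define s where "s k = (\<lambda>i. if i < m then x i k else undefined)" for k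
    have s: "s k \<in> tuples m S" for k
      unfolding s_def using x by (intro tuples_restrictI) auto
    have "\<Phi> j (s k) \<in> S" for k using S s j by blast
    moreover have "(\<lambda>k. \<Phi> j (s k)) \<longlonglongrightarrow> \<Phi> j z"
      by (rule continuous_dmax_tendsto[OF m, of "\<Phi> j"])
        (use cont j z s x in \<open>auto simp: s_def tuples_iff\<close>)
    ultimately show "\<Phi> j z \<in> closure S"
      unfolding closure_sequential by (intro exI[of _ "\<lambda>k. \<Phi> j (s k)"]) auto
  qed
qed

subsection \<open>Uniqueness of the attractor\<close>

definition contraction_modulus ::
    "nat \<Rightarrow> ((nat \<Rightarrow> 'a::metric_space) \<Rightarrow> 'a) \<Rightarrow> (real \<Rightarrow> real) \<Rightarrow> bool" where
  "contraction_modulus m f \<psi> \<longleftrightarrow> mono_on {0..} \<psi> \<and> (\<forall>t>0. \<psi> t < t) \<and>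
     (\<forall>x\<in>tuples m UNIV. \<forall>y\<in>tuples m UNIV. dist (f x) (f y) \<le> \<psi> (dmax m x y))"

lemma matkowski_contraction_imp_modulus:
  assumes "matkowski_contraction m f"
  obtains \<psi> where "contraction_modulus m f \<psi>"
proof -
  obtain \<phi> :: "real \<Rightarrow> real" where \<phi>: "mono_on {0..} \<phi>" "\<forall>t>0. (\<lambda>k. (\<phi> ^^ k) t) \<longlonglongrightarrow> 0"
    "\<forall>x\<in>tuples m UNIV. \<forall>y\<in>tuples m UNIV. dist (f x) (f y) \<le> \<phi> (dmax m x y)"
    using assms unfolding matkowski_contraction_def by blast
  have "\<phi> t < t" if t: "t > 0" for t
  proof (rule ccontr)
    assume "\<not> \<phi> t < t"
    then have "t \<le> (\<phi> ^^ k) t" for k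
    proof (induction k)
      case (Suc k)
      then have "\<phi> t \<le> \<phi> ((\<phi> ^^ k) t)" using \<phi>(1) t by (auto intro: mono_onD)
      then show ?case using Suc.prems by simp
    qed simp
    then have "t \<le> 0" using LIMSEQ_le_const[OF \<phi>(2)[rule_format, OF t]] by auto
    then show False using t by simp
  qed
  then show thesis using that \<phi> unfolding contraction_modulus_def by blast
qed

lemma compact_infdist_attained:
  fixes D :: "'a::metric_space set"
  assumes "compact D" "D \<noteq> {}"
  obtains b where "b \<in> D" "dist x b = infdist x D"
proof -
  have "continuous_on D (dist x)" by (intro continuous_intros)
  then obtain b where b: "b \<in> D" "\<forall>b'\<in>D. dist x b \<le> dist x b'"
    using continuous_attains_inf[OF assms] by blast
  then have "dist x b \<le> infdist x D"
    unfolding infdist_def using assms(2) by (auto intro: cINF_greatest)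
  then show thesis using that[OF b(1)] infdist_le[OF b(1), of x] by linarith
qed

lemma contraction_modulus_near_tuples:
  assumes m: "m \<ge> 1" and \<psi>: "contraction_modulus m f \<psi>" and D: "compact D" "D \<noteq> {}"
    and x: "x \<in> tuples m UNIV" and near: "\<And>i. i < m \<Longrightarrow> infdist (x i) D \<le> t"
  obtains y where "y \<in> tuples m D" "dist (f x) (f y) \<le> \<psi> t"
proof -
  have "\<exists>b\<in>D. dist (x i) b \<le> t" if "i < m" for i
    using compact_infdist_attained[OF D] near[OF that] by metis
  then obtain b where b: "\<And>i. i < m \<Longrightarrow> b i \<in> D \<and> dist (x i) (b i) \<le> t"
    by metis
  define y where "y = (\<lambda>i. if i < m then b i else undefined)"
  have y: "y \<in> tuples m D"
    unfolding y_def using b by (intro tuples_restrictI) auto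
  have "dmax m x y \<le> t" using b m by (simp add: dmax_le_iff y_def)
  then have "\<psi> (dmax m x y) \<le> \<psi> t"
    using \<psi> dmax_nonneg[OF m, of x y] unfolding contraction_modulus_def by (auto intro: mono_onD)
  moreover have "dist (f x) (f y) \<le> \<psi> (dmax m x y)"
    using \<psi> x y tuples_mono[of D UNIV m] unfolding contraction_modulus_def by blast
  ultimately show thesis using that y by force
qed

lemma gifs_invariant_infdist_less:
  fixes \<Phi> :: "nat \<Rightarrow> (nat \<Rightarrow> 'a::metric_space) \<Rightarrow> 'a"
  assumes m: "m \<ge> 1" and \<Psi>: "\<forall>j\<in>J. contraction_modulus m (\<Phi> j) (\<Psi> j)"
    and A: "A = (\<Union>j\<in>J. \<Phi> j ` tuples m A)"
    and B: "compact B" "B \<noteq> {}" "B = (\<Union>j\<in>J. \<Phi> j ` tuples m B)"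
    and t: "t > 0" "\<forall>a\<in>A. infdist a B \<le> t" and a: "a \<in> A"
  shows "infdist a B < t"
proof -
  obtain j x where j: "j \<in> J" and x: "x \<in> tuples m A" and ax: "a = \<Phi> j x"
    using A a by blast
  have "infdist (x i) B \<le> t" if "i < m" for i
    using t(2) x that by (simp add: tuples_iff)
  then obtain y where y: "y \<in> tuples m B" "dist a (\<Phi> j y) \<le> \<Psi> j t"
    using contraction_modulus_near_tuples[OF m _ B(1,2)] \<Psi> j x tuples_mono[of A UNIV m] ax
    by blast
  have "\<Phi> j y \<in> B" using B(3) j y(1) by blast
  then have "infdist a B \<le> \<Psi> j t" using y(2) by (rule infdist_le2)
  also have "\<Psi> j t < t" using \<Psi> j t(1) unfolding contraction_modulus_def by blast
  finally show ?thesis .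
qed

lemma compact_infdist_attains_sup:
  fixes A B :: "'a::metric_space set"
  assumes "compact A" "A \<noteq> {}"
  obtains a where "a \<in> A" "\<forall>a'\<in>A. infdist a' B \<le> infdist a B"
proof -
  have "continuous_on A (\<lambda>a. infdist a B)"
    by (intro continuous_at_imp_continuous_on ballI continuous_infdist continuous_ident)
  then show thesis using continuous_attains_sup[OF assms] that by blast
qed

text \<open>Take \<open>t\<close> to be the Hausdorff distance of \<open>A\<close> and \<open>B\<close>: if it were positive, each point
  of \<open>A\<close> would lie strictly closer than \<open>t\<close> to \<open>B\<close> and vice versa, and the suprema are attained.\<close>

lemma gifs_invariant_unique:
  fixes \<Phi> :: "nat \<Rightarrow> (nat \<Rightarrow> 'a::metric_space) \<Rightarrow> 'a"
  assumes m: "m \<ge> 1" and M: "\<forall>j\<in>J. matkowski_contraction m (\<Phi> j)"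
    and A: "compact A" "A \<noteq> {}" "A = (\<Union>j\<in>J. \<Phi> j ` tuples m A)"
    and B: "compact B" "B \<noteq> {}" "B = (\<Union>j\<in>J. \<Phi> j ` tuples m B)"
  shows "A = B"
proof -
  have "\<forall>j\<in>J. \<exists>\<psi>. contraction_modulus m (\<Phi> j) \<psi>"
    using M matkowski_contraction_imp_modulus by metis
  then obtain \<Psi> where \<Psi>: "\<forall>j\<in>J. contraction_modulus m (\<Phi> j) (\<Psi> j)"
    by metis
  obtain a0 where a0: "a0 \<in> A" "\<forall>a\<in>A. infdist a B \<le> infdist a0 B"
    using compact_infdist_attains_sup[OF A(1,2)] by blast
  obtain b0 where b0: "b0 \<in> B" "\<forall>b\<in>B. infdist b A \<le> infdist b0 A"
    using compact_infdist_attains_sup[OF B(1,2)] by blast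
  define t where "t = max (infdist a0 B) (infdist b0 A)"
  have "t \<le> 0"
  proof (rule ccontr)
    assume "\<not> t \<le> 0"
    then have "infdist a0 B < t" "infdist b0 A < t"
      using gifs_invariant_infdist_less[OF m \<Psi> A(3) B, of t a0]
        gifs_invariant_infdist_less[OF m \<Psi> B(3) A, of t b0] a0 b0
      unfolding t_def by fastforce+
    then show False unfolding t_def by linarith
  qed
  then have "\<forall>a\<in>A. infdist a B = 0" "\<forall>b\<in>B. infdist b A = 0"
    using a0(2) b0(2) infdist_nonneg unfolding t_def by (smt (verit))+
  then show ?thesis
    using in_closed_iff_infdist_zero[OF compact_imp_closed[OF A(1)] A(2)]
      in_closed_iff_infdist_zero[OF compact_imp_closed[OF B(1)] B(2)] by blast
qed

lemma gifs_attractor_eqI: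
  fixes \<Phi> :: "nat \<Rightarrow> (nat \<Rightarrow> 'a::metric_space) \<Rightarrow> 'a"
  assumes "m \<ge> 1" "\<forall>j\<in>J. matkowski_contraction m (\<Phi> j)"
    and "compact A" "A \<noteq> {}" "A = (\<Union>j\<in>J. \<Phi> j ` tuples m A)"
  shows "gifs_attractor m J \<Phi> = A"
  unfolding gifs_attractor_def
  by (rule the_equality) (use assms gifs_invariant_unique[OF assms(1,2)] in blast)+

lemma fuzzy_prod_gt_iff: "m \<ge> 1 \<Longrightarrow> a < fuzzy_prod m (\<lambda>_. u) z \<longleftrightarrow> (\<forall>i<m. a < u (z i))"
  unfolding fuzzy_prod_def using lessThan_empty_iff[of m] by (subst Min_gr_iff) auto

lemma fuzzy_prod_ge_iff: "m \<ge> 1 \<Longrightarrow> a \<le> fuzzy_prod m (\<lambda>_. u) z \<longleftrightarrow> (\<forall>i<m. a \<le> u (z i))"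
  unfolding fuzzy_prod_def using lessThan_empty_iff[of m] by (subst Min_ge_iff) auto

lemma fuzzy_prod_le_1:
  assumes "m \<ge> 1" "\<forall>x. u x \<le> 1"
  shows "fuzzy_prod m (\<lambda>_. u) z \<le> 1"
proof -
  have "fuzzy_prod m (\<lambda>_. u) z \<le> u (z 0)"
    unfolding fuzzy_prod_def using assms(1) by (intro Min_le) auto
  then show ?thesis using assms(2) by (meson order_trans)
qed

lemma zadeh_ext_gt_iff:
  fixes v :: "'z \<Rightarrow> real"
  assumes "\<forall>z\<in>Z. v z \<le> 1" and "0 \<le> a"
  shows "a < zadeh_ext Z f v y \<longleftrightarrow> (\<exists>z\<in>Z. f z = y \<and> a < v z)"
proof (cases "y \<in> f ` Z")
  case True
  let ?V = "{v z | z. z \<in> Z \<and> f z = y}"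
  have "?V \<noteq> {}" "bdd_above ?V" using True assms(1) by (auto intro: bdd_aboveI[of _ 1])
  then have "a < Sup ?V \<longleftrightarrow> (\<exists>x\<in>?V. a < x)" by (rule less_cSup_iff)
  then show ?thesis unfolding zadeh_ext_def using True by auto
qed (use assms(2) in \<open>auto simp: zadeh_ext_def\<close>)

lemma zadeh_ext_upper:
  fixes v :: "'z \<Rightarrow> real"
  assumes "\<forall>z\<in>Z. v z \<le> 1" and "z \<in> Z" "f z = y"
  shows "v z \<le> zadeh_ext Z f v y"
proof -
  have "bdd_above {v z | z. z \<in> Z \<and> f z = y}" using assms(1) by (auto intro: bdd_aboveI[of _ 1])
  then show ?thesis unfolding zadeh_ext_def using assms(2,3) by (auto intro: cSup_upper)
qed

lemma zadeh_ext_bounds: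
  fixes v :: "'z \<Rightarrow> real"
  assumes "\<forall>z\<in>Z. 0 \<le> v z \<and> v z \<le> 1"
  shows "0 \<le> zadeh_ext Z f v y \<and> zadeh_ext Z f v y \<le> 1"
proof (cases "y \<in> f ` Z")
  case True
  let ?V = "{v z | z. z \<in> Z \<and> f z = y}"
  have "?V \<noteq> {}" "bdd_above ?V" using True assms by (auto intro: bdd_aboveI[of _ 1])
  then have "0 \<le> Sup ?V" "Sup ?V \<le> 1" using assms by (auto intro: cSup_upper2 cSup_least)
  then show ?thesis unfolding zadeh_ext_def using True by auto
qed (simp add: zadeh_ext_def)

lemma proper_family_pos_iff:
  assumes pr: "proper_family n \<rho>" and j: "j < n" and t: "0 \<le> t" "t \<le> 1"
  shows "0 < \<rho> j t \<longleftrightarrow> 0 < t"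
proof -
  have ad: "\<forall>s\<in>{0..1}. 0 \<le> \<rho> j s \<and> \<rho> j s \<le> 1" "mono_on {0..1} (\<rho> j)" "\<rho> j 0 = 0"
    "r_plus (\<rho> j) = 0" "beta (\<rho> j) (\<rho> j 1) = 1"
    using pr j unfolding proper_family_def admissible_def by auto
  have "0 < \<rho> j t" if "0 < t"
  proof (rule ccontr)
    assume "\<not> 0 < \<rho> j t"
    then have le: "\<rho> j t \<le> 0" by simp
    let ?S = "{s\<in>{0..1}. 0 < \<rho> j s}"
    have above: "t < s" if "s \<in> ?S" for s
    proof (rule ccontr)
      assume "\<not> t < s"
      then have "\<rho> j s \<le> \<rho> j t" using that t by (intro mono_onD[OF ad(2)]) auto
      then show False using le that by auto
    qed
    show False
    proof (cases "?S = {}")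
      case True
      then have "\<rho> j 1 \<le> 0" by auto
      then have "\<rho> j 1 = 0" using ad(1) by (meson atLeastAtMost_iff order_antisym order_refl zero_le_one)
      then have "{s\<in>{0..1}. \<rho> j 1 \<le> \<rho> j s} = {0..1}" using ad(1) by auto
      then show False using ad(5) unfolding beta_def by simp
    next
      case False
      then have "t \<le> Inf ?S" using above by (intro cInf_greatest) (auto intro: less_imp_le)
      then show False using ad(4) \<open>0 < t\<close> unfolding r_plus_def by simp
    qed
  qed
  then show ?thesis using ad(3) t by (cases "t = 0") auto
qed

lemma proper_family_ge_1_iff:
  assumes pr: "proper_family n \<rho>" and j: "j < n" and t: "0 \<le> t" "t \<le> 1"
  shows "1 \<le> \<rho> j t \<longleftrightarrow> \<rho> j 1 = 1 \<and> t = 1"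
proof
  assume ge: "1 \<le> \<rho> j t"
  have ad: "\<forall>s\<in>{0..1}. \<rho> j s \<le> 1" "beta (\<rho> j) (\<rho> j 1) = 1"
    using pr j unfolding proper_family_def admissible_def by auto
  then have "\<rho> j 1 \<le> 1" by simp
  have "t = 1"
  proof (rule ccontr)
    assume "t \<noteq> 1"
    have "t \<in> {s\<in>{0..1}. \<rho> j 1 \<le> \<rho> j s}"
      using ge t \<open>\<rho> j 1 \<le> 1\<close> by simp
    then have "beta (\<rho> j) (\<rho> j 1) \<le> t"
      unfolding beta_def by (rule cInf_lower) (auto intro: bdd_belowI[of _ 0])
    then show False using ad(2) t(2) \<open>t \<noteq> 1\<close> by simp
  qed
  then show "\<rho> j 1 = 1 \<and> t = 1" using ge \<open>\<rho> j 1 \<le> 1\<close> by simp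
qed simp

subsection \<open>Upper semicontinuity\<close>

lemma usc_closed_superlevel:
  fixes u :: "'a::topological_space \<Rightarrow> real"
  assumes "usc u"
  shows "closed {x. a \<le> u x}"
proof -
  have "open {x. u x < a}"
  proof (rule iffD2[OF open_subopen], rule ballI)
    fix x assume "x \<in> {x. u x < a}"
    then have "\<forall>\<^sub>F y in at x. u y < u x + (a - u x)"
      using assms unfolding usc_def by (metis diff_gt_0_iff_gt mem_Collect_eq)
    then obtain S where "open S" "x \<in> S" "\<And>y. y \<in> S \<Longrightarrow> y \<noteq> x \<Longrightarrow> u y < a"
      unfolding eventually_at_topological by auto
    then show "\<exists>T. open T \<and> x \<in> T \<and> T \<subseteq> {x. u x < a}"
      using \<open>x \<in> {x. u x < a}\<close> by blast
  qed
  moreover have "{x. a \<le> u x} = - {x. u x < a}" by auto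
  ultimately show ?thesis by (simp add: closed_def)
qed

lemma usc_tendsto_ge:
  fixes u :: "'a::topological_space \<Rightarrow> real"
  assumes "usc u" "X \<longlonglongrightarrow> x" "b \<longlonglongrightarrow> c" "\<And>k. b k \<le> u (X k)"
  shows "c \<le> u x"
proof (rule dense_le)
  fix a assume "a < c"
  then have "eventually (\<lambda>k. a < b k) sequentially" using order_tendstoD(1)[OF assms(3)] by blast
  then have "eventually (\<lambda>k. X k \<in> {x. a \<le> u x}) sequentially"
    by eventually_elim (use assms(4) in \<open>auto intro: less_imp_le order_trans\<close>)
  then show "a \<le> u x"
    using Lim_in_closed_set[OF usc_closed_superlevel[OF assms(1)] _ _ assms(2)] by simp
qed

text \<open>The supremum defining the Zadeh extension at grade \<open>1\<close> is attained: take tuples of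
  grade \<open>> 1 - 1/(k+1)\<close>, which lie in the compact support, and a convergent subsequence.\<close>

lemma zadeh_ext_ge_1_attained:
  fixes u :: "'a::metric_space \<Rightarrow> real"
  assumes m: "m \<ge> 1" and f: "continuous_dmax m f" and us: "usc u" and u1: "\<forall>x. u x \<le> 1"
    and K: "compact K" "{x. 0 < u x} \<subseteq> K"
    and y: "1 \<le> zadeh_ext (tuples m UNIV) f (fuzzy_prod m (\<lambda>_. u)) y"
  obtains w where "w \<in> tuples m {x. 1 \<le> u x}" "f w = y"
proof -
  define b where "b k = 1 - inverse (real (Suc k))" for k
  have b: "0 \<le> b k" "b k < 1" for k by (simp_all add: b_def field_simps)
  have "\<forall>z\<in>tuples m UNIV. fuzzy_prod m (\<lambda>_. u) z \<le> 1"
    using fuzzy_prod_le_1[OF m] u1 by blast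
  moreover have "b k < zadeh_ext (tuples m UNIV) f (fuzzy_prod m (\<lambda>_. u)) y" for k
    using y b(2)[of k] by linarith
  ultimately have "\<exists>z\<in>tuples m UNIV. f z = y \<and> b k < fuzzy_prod m (\<lambda>_. u) z" for k
    using zadeh_ext_gt_iff[of "tuples m UNIV" "fuzzy_prod m (\<lambda>_. u)" "b k" f y] b(1)[of k] by blast
  then obtain z where z: "\<And>k. z k \<in> tuples m UNIV" "\<And>k. f (z k) = y"
    "\<And>k. b k < fuzzy_prod m (\<lambda>_. u) (z k)"
    by metis
  have zi: "b k < u (z k i)" if "i < m" for k i
    using z(3)[of k] that by (simp add: fuzzy_prod_gt_iff[OF m])
  have "z k i \<in> K" if "i < m" for k i
    using zi[OF that, of k] b(1)[of k] K(2) by auto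
  then obtain r w where r: "strict_mono r" "w \<in> tuples m K"
    "\<And>i. i < m \<Longrightarrow> (\<lambda>k. z (r k) i) \<longlonglongrightarrow> w i"
    using tuples_compact_convergent_subseq[OF K(1), of m z] by blast
  have "(\<lambda>k. f (z (r k))) \<longlonglongrightarrow> f w"
    by (rule continuous_dmax_tendsto[OF m f]) (use r z tuples_mono[of K UNIV m] in auto)
  then have "f w = y" using z(2) by (simp add: LIMSEQ_const_iff)
  have "b \<longlonglongrightarrow> 1"
    unfolding b_def using tendsto_diff[OF tendsto_const LIMSEQ_inverse_real_of_nat] by simp
  then have "(b \<circ> r) \<longlonglongrightarrow> 1" using r(1) by (rule LIMSEQ_subseq_LIMSEQ)
  then have "1 \<le> u (w i)" if "i < m" for i
    by (rule usc_tendsto_ge[OF us r(3)[OF that]]) (simp add: zi[OF that] less_imp_le)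
  then have "w \<in> tuples m {x. 1 \<le> u x}" using r(2) by (simp add: tuples_iff)
  then show thesis using that \<open>f w = y\<close> by blast
qed

subsection \<open>Cuts of a fixed point of the GIFZS operator\<close>

locale gifzs_fixed_point =
  fixes m n :: nat
    and \<Phi> :: "nat \<Rightarrow> (nat \<Rightarrow> 'a::metric_space) \<Rightarrow> 'a"
    and \<rho> :: "nat \<Rightarrow> real \<Rightarrow> real"
    and u :: "'a \<Rightarrow> real"
  assumes degree_pos: "m \<ge> 1"
    and proper: "proper_family n \<rho>"
    and grade_bounds: "\<forall>x. 0 \<le> u x \<and> u x \<le> 1"
    and fixed_point: "gifzs_op m n \<Phi> \<rho> (\<lambda>_. u) = u"
begin

definition image_grade :: "nat \<Rightarrow> 'a \<Rightarrow> real" where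
  "image_grade j = zadeh_ext (tuples m UNIV) (\<Phi> j) (fuzzy_prod m (\<lambda>_. u))"

lemma eq_Max_image_grade: "u y = Max ((\<lambda>j. \<rho> j (image_grade j y)) ` {..<n})"
  using fun_cong[OF fixed_point, of y] unfolding gifzs_op_def image_grade_def by simp

lemma index_set_nonempty: "{..<n} \<noteq> {}"
  using proper unfolding proper_family_def admissible_def by auto

lemma fuzzy_prod_bounds: "\<forall>z\<in>tuples m UNIV. 0 \<le> fuzzy_prod m (\<lambda>_. u) z \<and> fuzzy_prod m (\<lambda>_. u) z \<le> 1"
  using fuzzy_prod_ge_iff[OF degree_pos, of 0 u] fuzzy_prod_le_1[OF degree_pos, of u] grade_bounds
  by auto

lemma image_grade_bounds: "0 \<le> image_grade j y \<and> image_grade j y \<le> 1"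
  unfolding image_grade_def by (rule zadeh_ext_bounds[OF fuzzy_prod_bounds])

lemma pos_iff: "0 < u y \<longleftrightarrow> (\<exists>j<n. \<exists>z\<in>tuples m {x. 0 < u x}. \<Phi> j z = y)"
proof -
  have prod_le_1: "\<forall>z\<in>tuples m UNIV. fuzzy_prod m (\<lambda>_. u) z \<le> 1"
    using fuzzy_prod_bounds by blast
  have grade_pos: "0 < \<rho> j (image_grade j y) \<longleftrightarrow> 0 < image_grade j y" if "j < n" for j
    using proper_family_pos_iff[OF proper that] image_grade_bounds[of j y] by blast
  have "0 < u y \<longleftrightarrow> (\<exists>j<n. 0 < \<rho> j (image_grade j y))"
    unfolding eq_Max_image_grade[of y] using index_set_nonempty by (subst Max_gr_iff) auto
  also have "\<dots> \<longleftrightarrow> (\<exists>j<n. 0 < image_grade j y)"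
    using grade_pos by auto
  also have "\<dots> \<longleftrightarrow> (\<exists>j<n. \<exists>z\<in>tuples m UNIV. \<Phi> j z = y \<and> 0 < fuzzy_prod m (\<lambda>_. u) z)"
    unfolding image_grade_def by (simp add: zadeh_ext_gt_iff[OF prod_le_1 order.refl])
  also have "\<dots> \<longleftrightarrow> (\<exists>j<n. \<exists>z\<in>tuples m {x. 0 < u x}. \<Phi> j z = y)"
  proof -
    have "z \<in> tuples m UNIV \<and> (\<forall>i<m. 0 < u (z i)) \<longleftrightarrow> z \<in> tuples m {x. 0 < u x}" for z
      by (auto simp: tuples_iff)
    then show ?thesis unfolding fuzzy_prod_gt_iff[OF degree_pos] by blast
  qed
  finally show ?thesis .
qed

lemma support_invariant: "{x. 0 < u x} = (\<Union>j<n. \<Phi> j ` tuples m {x. 0 < u x})"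
proof (rule set_eqI)
  fix y show "y \<in> {x. 0 < u x} \<longleftrightarrow> y \<in> (\<Union>j<n. \<Phi> j ` tuples m {x. 0 < u x})"
    using pos_iff[of y] by blast
qed

lemma ge_1_iff: "1 \<le> u y \<longleftrightarrow> (\<exists>j<n. \<rho> j 1 = 1 \<and> image_grade j y = 1)"
proof -
  have "1 \<le> u y \<longleftrightarrow> (\<exists>j<n. 1 \<le> \<rho> j (image_grade j y))"
    unfolding eq_Max_image_grade[of y] using index_set_nonempty by (subst Max_ge_iff) auto
  moreover have "1 \<le> \<rho> j (image_grade j y) \<longleftrightarrow> \<rho> j 1 = 1 \<and> image_grade j y = 1" if "j < n" for j
    using proper_family_ge_1_iff[OF proper that] image_grade_bounds[of j y] by blast
  ultimately show ?thesis by auto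
qed

lemma one_cut_invariant:
  assumes cont: "\<forall>j<n. continuous_dmax m (\<Phi> j)" and us: "usc u"
    and K: "compact (closure {x. 0 < u x})"
  shows "{x. 1 \<le> u x} = (\<Union>j\<in>{j. j < n \<and> \<rho> j 1 = 1}. \<Phi> j ` tuples m {x. 1 \<le> u x})"
proof (intro equalityI subsetI)
  fix y assume "y \<in> {x. 1 \<le> u x}"
  then obtain j where j: "j < n" "\<rho> j 1 = 1" "image_grade j y = 1"
    using ge_1_iff[of y] by auto
  have "continuous_dmax m (\<Phi> j)" using cont j(1) by blast
  moreover have "\<forall>x. u x \<le> 1" using grade_bounds by blast
  moreover have "1 \<le> zadeh_ext (tuples m UNIV) (\<Phi> j) (fuzzy_prod m (\<lambda>_. u)) y"
    using j(3) unfolding image_grade_def by simp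
  ultimately obtain w where "w \<in> tuples m {x. 1 \<le> u x}" "\<Phi> j w = y"
    by (rule zadeh_ext_ge_1_attained[OF degree_pos _ us _ K closure_subset])
  then show "y \<in> (\<Union>j\<in>{j. j < n \<and> \<rho> j 1 = 1}. \<Phi> j ` tuples m {x. 1 \<le> u x})"
    using j by blast
next
  fix y assume "y \<in> (\<Union>j\<in>{j. j < n \<and> \<rho> j 1 = 1}. \<Phi> j ` tuples m {x. 1 \<le> u x})"
  then obtain j z where j: "j < n" "\<rho> j 1 = 1" and z: "z \<in> tuples m {x. 1 \<le> u x}"
    and y: "y = \<Phi> j z"
    by blast
  have "1 \<le> fuzzy_prod m (\<lambda>_. u) z"
    using z by (simp add: fuzzy_prod_ge_iff[OF degree_pos] tuples_iff)
  also have "\<dots> \<le> image_grade j y"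
    unfolding image_grade_def y
    by (rule zadeh_ext_upper) (use fuzzy_prod_bounds z tuples_mono[of _ UNIV m] in auto)
  finally show "y \<in> {x. 1 \<le> u x}"
    using ge_1_iff[of y] j image_grade_bounds[of j y] by auto
qed

end

theorem mainTheorem17:
  fixes m n :: nat
    and \<Phi> :: "nat \<Rightarrow> (nat \<Rightarrow> 'a::complete_space) \<Rightarrow> 'a"
    and \<rho> :: "nat \<Rightarrow> real \<Rightarrow> real"
    and u :: "'a \<Rightarrow> real"
  assumes "m \<ge> 1"
    and "\<forall>j<n. continuous_dmax m (\<Phi> j)"
    and "\<forall>j<n. matkowski_contraction m (\<Phi> j)"
    and "proper_family n \<rho>"
    and "u \<in> fuzzy_star"
    and "gifzs_op m n \<Phi> \<rho> (\<lambda>_. u) = u"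
  shows "level u 0 = gifs_attractor m {..<n} \<Phi> \<and>
         level u 1 = gifs_attractor m {j. j < n \<and> \<rho> j 1 = 1} \<Phi>"
proof -
  note m = assms(1) and cont = assms(2) and matk = assms(3)
  have bounds: "\<forall>x. 0 \<le> u x \<and> u x \<le> 1" and normal: "\<exists>x. u x = 1" and us: "usc u"
    and K: "compact (closure {x. 0 < u x})"
    using assms(5) unfolding fuzzy_star_def level_def by auto
  interpret gifzs_fixed_point m n \<Phi> \<rho> u
    using assms(1,4,6) bounds by unfold_locales
  have "{x. 1 \<le> u x} \<subseteq> {x. 0 < u x}" by auto
  also have "\<dots> \<subseteq> closure {x. 0 < u x}" by (rule closure_subset)
  finally have one_cut_sub: "{x. 1 \<le> u x} \<subseteq> closure {x. 0 < u x}" .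
  then have one_cut_compact: "compact {x. 1 \<le> u x}"
    using compact_Int_closed[OF K usc_closed_superlevel[OF us, of 1]] by (simp add: Int_absorb1)
  obtain x1 where "u x1 = 1" using normal by blast
  then have x1: "x1 \<in> {x. 1 \<le> u x}" by simp
  have nonempty: "{x. 1 \<le> u x} \<noteq> {}" "closure {x. 0 < u x} \<noteq> {}"
    using x1 subsetD[OF one_cut_sub x1] by (metis equals0D)+
  have support_closure_invariant:
    "closure {x. 0 < u x} = (\<Union>j<n. \<Phi> j ` tuples m (closure {x. 0 < u x}))"
    by (rule gifs_invariant_closure[OF m _ _ K support_invariant]) (use cont in auto)
  have "gifs_attractor m {..<n} \<Phi> = closure {x. 0 < u x}"
    by (rule gifs_attractor_eqI[OF m _ K nonempty(2) support_closure_invariant]) (use matk in auto)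
  moreover have "gifs_attractor m {j. j < n \<and> \<rho> j 1 = 1} \<Phi> = {x. 1 \<le> u x}"
    by (rule gifs_attractor_eqI[OF m _ one_cut_compact nonempty(1) one_cut_invariant[OF cont us K]])
      (use matk in auto)
  ultimately show ?thesis unfolding level_def by simp
qed

end
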